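(* Let $M$ be a simply-connected domain in the Minkowski plane $(\mathbb{R}^2(u,v),du\,dv)$, let $\omega,Q,R:M\to\mathbb{R}$ be smooth functions and $H\in\mathbb{R}$ a constant. (1) Suppose $\Phi=(\Phi_1,\Phi_2):M\to\mathrm{SL}_2\mathbb{R}\times\mathrm{SL}_2\mathbb{R}$ is smooth and satisfies $(\Phi_1)_u=\Phi_1\mathcal U_1$, $(\Phi_1)_v=\Phi_1\mathcal V_1$, $(\Phi_2)_u=\Phi_2\mathcal U_2$, $(\Phi_2)_v=\Phi_2\mathcal V_2$, where $$\mathcal U_1=\begin{pmatrix}\frac{\omega_u}{4}&\frac12e^{\omega/2}(H+1)\\-e^{-\omega/2}Q&-\frac{\omega_u}{4}\end{pmatrix},\ \mathcal V_1=\begin{pmatrix}-\frac{\omega_v}{4}&e^{-\omega/2}R\\-\frac12e^{\omega/2}(H-1)&\frac{\omega_v}{4}\end{pmatrix},$$ $$\mathcal U_2=\begin{pmatrix}-\frac{\omega_u}{4}&e^{-\omega/2}Q\\-\frac12e^{\omega/2}(H-1)&\frac{\omega_u}{4}\end{pmatrix},\ \mathcal V_2=\begin{pmatrix}\frac{\omega_v}{4}&\frac12e^{\omega/2}(H+1)\\-e^{-\omega/2}R&-\frac{\omega_v}{4}\end{pmatrix}.$$ Then $\varphi:=\Phi_1\Phi_2^t:M\to\mathbb{H}^3_1(-1)$ is a conformal timelike immersion with induced metric $e^{\omega}du\,dv$ and constant mean curvature $H$ (with respect to the unit normal $N=\Phi_1\mathbf k'\Phi_2^t$). (2) Suppose $\Psi=(\Psi_1,\Psi_2):M\to\mathrm{SL}_2\mathbb{R}\times\mathrm{SL}_2\mathbb{R}$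 is smooth and satisfies $(\Psi_1)_u=\Psi_1\mathcal U_1$, $(\Psi_1)_v=\Psi_1\mathcal V_1$, $(\Psi_2)_u=\Psi_2\mathcal U_2'$, $(\Psi_2)_v=\Psi_2\mathcal V_2'$, with $\mathcal U_1,\mathcal V_1$ as in (1) and $$\mathcal U_2'=\begin{pmatrix}\frac{\omega_u}{4}&\frac12e^{\omega/2}(H-1)\\-e^{-\omega/2}Q&-\frac{\omega_u}{4}\end{pmatrix},\ \mathcal V_2'=\begin{pmatrix}-\frac{\omega_v}{4}&e^{-\omega/2}R\\-\frac12e^{\omega/2}(H+1)&\frac{\omega_v}{4}\end{pmatrix}.$$ Then $\psi:=\Psi_1\Psi_2^{-1}:M\to\mathbb{H}^3_1(-1)$ is a conformal timelike immersion with induced metric $e^{\omega}du\,dv$ and constant mean curvature $H$ (with respect to the unit normal $N=\Psi_1\mathbf k'\Psi_2^{-1}$).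
   Context: $\mathbb{E}^4_2$ is $\mathbb{R}^4$ with metric $-(dx_0)^2-(dx_1)^2+(dx_2)^2+(dx_3)^2$, identified with $M_2(\mathbb{R})$ via $(x_0,x_1,x_2,x_3)\mapsto \begin{pmatrix}x_0+x_3& x_1+x_2\\ -x_1+x_2 & x_0-x_3\end{pmatrix}$, so that $\langle u,v\rangle=\tfrac12\{\operatorname{tr}(uv)-\operatorname{tr}u\operatorname{tr}v\}$, $\langle u,u\rangle=-\det u$, and anti-de Sitter space $\mathbb{H}^3_1(-1)=\{\langle x,x\rangle=-1\}$ becomes $\mathrm{SL}_2\mathbb{R}$. $\mathbf k'=\begin{pmatrix}1&0\\0&-1\end{pmatrix}$. For an immersion $\varphi$ of a domain with null coordinates $(u,v)$, conformal timelike means $\langle\varphi_u,\varphi_u\rangle=\langle\varphi_v,\varphi_v\rangle=0$, $\langle\varphi_u,\varphi_v\rangle=\tfrac12e^{\omega}$ (metric $e^\omega du\,dv$); for a unit normal $N$ ($\langle N,N\rangle=1$, $N\perp\varphi,\varphi_u,\varphi_v$) the mean curvature is $H=2e^{-\omega}\langle\varphi_{uv},N\rangle$. *)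

theory Defs
  imports "HOL-Analysis.Analysis"
begin

text \<open>A map f on S is smooth (C-infinity)
iff there is a family D i j (intended: the partial derivative of order i in u and j in v)
with D 0 0 = f on S, every D i j continuous on S and Frechet differentiable at every point
of S with derivative (h,k) |-> h D(i+1,j) + k D(i,j+1).\<close>

definition smooth_on :: "(real \<times> real) set \<Rightarrow> (real \<times> real \<Rightarrow> 'b::real_normed_vector) \<Rightarrow> bool" where
  "smooth_on S f \<longleftrightarrow>
     (\<exists>D :: nat \<Rightarrow> nat \<Rightarrow> (real \<times> real \<Rightarrow> 'b).
        (\<forall>p\<in>S. D 0 0 p = f p) \<and>
        (\<forall>i j. continuous_on S (D i j)) \<and>
        (\<forall>i j. \<forall>p\<in>S. (D i j has_derivative
              (\<lambda>(h,k). h *\<^sub>R D (Suc i) j p + k *\<^sub>R D i (Suc j) p)) (at p)))"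

definition pu :: "(real \<times> real \<Rightarrow> 'b::real_normed_vector) \<Rightarrow> real \<times> real \<Rightarrow> 'b" where
  "pu f p = vector_derivative (\<lambda>s. f (s, snd p)) (at (fst p))"

definition pv :: "(real \<times> real \<Rightarrow> 'b::real_normed_vector) \<Rightarrow> real \<times> real \<Rightarrow> 'b" where
  "pv f p = vector_derivative (\<lambda>t. f (fst p, t)) (at (snd p))"

type_synonym mat2 = "real^2^2"

definition mat2 :: "real \<Rightarrow> real \<Rightarrow> real \<Rightarrow> real \<Rightarrow> mat2" where
  "mat2 a b c d = (\<chi> i j. if i = 1 then (if j = 1 then a else b) else (if j = 1 then c else d))"

definition mtrace :: "mat2 \<Rightarrow> real" where
  "mtrace A = A $ 1 $ 1 + A $ 2 $ 2"

text \<open>The metric of E^4_2: <u,v> = (tr(uv) - tr u tr v)/2, so <u,u> = - det u.\<close>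
definition lor_inner :: "mat2 \<Rightarrow> mat2 \<Rightarrow> real" where
  "lor_inner A B = (mtrace (A ** B) - mtrace A * mtrace B) / 2"

definition kprime :: mat2 where
  "kprime = mat2 1 0 0 (-1)"

definition U1 :: "(real\<times>real \<Rightarrow> real) \<Rightarrow> (real\<times>real \<Rightarrow> real) \<Rightarrow> real \<Rightarrow> real\<times>real \<Rightarrow> mat2" where
  "U1 \<omega> Q H p = mat2 (pu \<omega> p / 4) (exp (\<omega> p / 2) * (H + 1) / 2)
                    (- exp (- \<omega> p / 2) * Q p) (- pu \<omega> p / 4)"

definition V1 :: "(real\<times>real \<Rightarrow> real) \<Rightarrow> (real\<times>real \<Rightarrow> real) \<Rightarrow> real \<Rightarrow> real\<times>real \<Rightarrow> mat2" where
  "V1 \<omega> R H p = mat2 (- pv \<omega> p / 4) (exp (- \<omega> p / 2) * R p)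
                    (- exp (\<omega> p / 2) * (H - 1) / 2) (pv \<omega> p / 4)"

definition U2 :: "(real\<times>real \<Rightarrow> real) \<Rightarrow> (real\<times>real \<Rightarrow> real) \<Rightarrow> real \<Rightarrow> real\<times>real \<Rightarrow> mat2" where
  "U2 \<omega> Q H p = mat2 (- pu \<omega> p / 4) (exp (- \<omega> p / 2) * Q p)
                    (- exp (\<omega> p / 2) * (H - 1) / 2) (pu \<omega> p / 4)"

definition V2 :: "(real\<times>real \<Rightarrow> real) \<Rightarrow> (real\<times>real \<Rightarrow> real) \<Rightarrow> real \<Rightarrow> real\<times>real \<Rightarrow> mat2" where
  "V2 \<omega> R H p = mat2 (pv \<omega> p / 4) (exp (\<omega> p / 2) * (H + 1) / 2)
                    (- exp (- \<omega> p / 2) * R p) (- pv \<omega> p / 4)"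

definition U2' :: "(real\<times>real \<Rightarrow> real) \<Rightarrow> (real\<times>real \<Rightarrow> real) \<Rightarrow> real \<Rightarrow> real\<times>real \<Rightarrow> mat2" where
  "U2' \<omega> Q H p = mat2 (pu \<omega> p / 4) (exp (\<omega> p / 2) * (H - 1) / 2)
                     (- exp (- \<omega> p / 2) * Q p) (- pu \<omega> p / 4)"

definition V2' :: "(real\<times>real \<Rightarrow> real) \<Rightarrow> (real\<times>real \<Rightarrow> real) \<Rightarrow> real \<Rightarrow> real\<times>real \<Rightarrow> mat2" where
  "V2' \<omega> R H p = mat2 (- pv \<omega> p / 4) (exp (- \<omega> p / 2) * R p)
                     (- exp (\<omega> p / 2) * (H + 1) / 2) (pv \<omega> p / 4)"

definition SL2_map :: "(real \<times> real) set \<Rightarrow> (real \<times> real \<Rightarrow> mat2) \<Rightarrow> bool" where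
  "SL2_map S F \<longleftrightarrow> smooth_on S F \<and> (\<forall>p\<in>S. det (F p) = 1)"

definition conformal_timelike_cmc ::
  "(real \<times> real) set \<Rightarrow> (real \<times> real \<Rightarrow> mat2) \<Rightarrow> (real \<times> real \<Rightarrow> mat2)
     \<Rightarrow> (real \<times> real \<Rightarrow> real) \<Rightarrow> real \<Rightarrow> bool" where
  "conformal_timelike_cmc S \<phi> N \<omega> H \<longleftrightarrow>
     smooth_on S \<phi> \<and>
     (\<forall>p\<in>S.
        lor_inner (\<phi> p) (\<phi> p) = -1 \<and>
        (\<forall>a b. a *\<^sub>R pu \<phi> p + b *\<^sub>R pv \<phi> p = 0 \<longrightarrow> a = 0 \<and> b = 0) \<and>
        lor_inner (pu \<phi> p) (pu \<phi> p) = 0 \<and>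
        lor_inner (pv \<phi> p) (pv \<phi> p) = 0 \<and>
        lor_inner (pu \<phi> p) (pv \<phi> p) = exp (\<omega> p) / 2 \<and>
        lor_inner (N p) (N p) = 1 \<and>
        lor_inner (N p) (\<phi> p) = 0 \<and>
        lor_inner (N p) (pu \<phi> p) = 0 \<and>
        lor_inner (N p) (pv \<phi> p) = 0 \<and>
        H = 2 * exp (- \<omega> p) * lor_inner (pv (pu \<phi>) p) (N p))"

end

(*
  Both surfaces are products phi = F G of SL_2 R-valued maps with F^-1 F_u = U1,
  F^-1 F_v = V1, G_u G^-1 = U2^t and G_v G^-1 = V2^t: for G = Phi2^t this is the transpose of
  the frame equations of Phi2, and for G = Psi2^-1 = adj Psi2 it follows from adj U2' = U2^t and
  adj V2' = V2^t.  Since the metric of E^4_2 is the polarization of -det, the map X |-> F X G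
  is an isometry whenever det F = det G = 1, so all inner products can be read off from the
  middle factors: phi_u = F (U1 + U2^t) G and phi_v = F (V1 + V2^t) G with null middle factors
  having the single entry e^(omega/2) off the diagonal, N = F k' G, and
  phi_uv = F (V1 A + A_v + A V2^t) G with A = U1 + U2^t, whose k'-component is e^omega H / 2.
*)

theory Submission
  imports Defs
begin

section \<open>Partial derivatives in the null coordinates\<close>

lemma has_derivative_imp_pu:
  assumes f: "(f has_derivative L) (at p)"
  shows "pu f p = L (1, 0)"
proof -
  have "((\<lambda>s. (s, snd p)) has_derivative (\<lambda>s. (s, 0))) (at (fst p))"
    by (auto intro!: derivative_eq_intros)
  moreover have "(f has_derivative L) (at ((\<lambda>s. (s, snd p)) (fst p)))"
    using f by simp
  ultimately have "((\<lambda>s. f (s, snd p)) has_derivative (\<lambda>s. L (s, 0))) (at (fst p))"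
    by (rule has_derivative_compose)
  moreover have "(\<lambda>s. L (s, 0)) = (\<lambda>s. s *\<^sub>R L (1, 0))"
  proof
    fix s :: real
    show "L (s, 0) = s *\<^sub>R L (1, 0)"
      using linear_scale[OF has_derivative_linear[OF f], of s "(1, 0)"] by simp
  qed
  ultimately have "((\<lambda>s. f (s, snd p)) has_vector_derivative L (1, 0)) (at (fst p))"
    by (simp add: has_vector_derivative_def)
  then show ?thesis
    by (simp add: pu_def vector_derivative_at)
qed

lemma has_derivative_imp_pv:
  assumes f: "(f has_derivative L) (at p)"
  shows "pv f p = L (0, 1)"
proof -
  have "((\<lambda>t. (fst p, t)) has_derivative (\<lambda>t. (0, t))) (at (snd p))"
    by (auto intro!: derivative_eq_intros)
  moreover have "(f has_derivative L) (at ((\<lambda>t. (fst p, t)) (snd p)))"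
    using f by simp
  ultimately have "((\<lambda>t. f (fst p, t)) has_derivative (\<lambda>t. L (0, t))) (at (snd p))"
    by (rule has_derivative_compose)
  moreover have "(\<lambda>t. L (0, t)) = (\<lambda>t. t *\<^sub>R L (0, 1))"
  proof
    fix t :: real
    show "L (0, t) = t *\<^sub>R L (0, 1)"
      using linear_scale[OF has_derivative_linear[OF f], of t "(0, 1)"] by simp
  qed
  ultimately have "((\<lambda>t. f (fst p, t)) has_vector_derivative L (0, 1)) (at (snd p))"
    by (simp add: has_vector_derivative_def)
  then show ?thesis
    by (simp add: pv_def vector_derivative_at)
qed

lemma has_derivative_partials:
  assumes "f differentiable (at p)"
  shows "(f has_derivative (\<lambda>(h, k). h *\<^sub>R pu f p + k *\<^sub>R pv f p)) (at p)"
proof -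
  obtain L where f: "(f has_derivative L) (at p)"
    using assms differentiable_def by blast
  have "L = (\<lambda>(h, k). h *\<^sub>R pu f p + k *\<^sub>R pv f p)"
  proof (rule ext, clarify)
    fix h k :: real
    have "(h, k) = h *\<^sub>R (1, 0) + k *\<^sub>R (0, 1 :: real)" by simp
    then have "L (h, k) = h *\<^sub>R L (1, 0) + k *\<^sub>R L (0, 1)"
      by (metis has_derivative_linear[OF f] linear_add linear_scale)
    then show "L (h, k) = h *\<^sub>R pu f p + k *\<^sub>R pv f p"
      by (simp add: has_derivative_imp_pu[OF f] has_derivative_imp_pv[OF f])
  qed
  with f show ?thesis by simp
qed

lemma pu_pv_bounded_linear:
  assumes L: "bounded_linear L" and f: "f differentiable (at p)"
  shows "pu (\<lambda>q. L (f q)) p = L (pu f p)" and "pv (\<lambda>q. L (f q)) p = L (pv f p)"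
proof -
  note d = bounded_linear.has_derivative[OF L has_derivative_partials[OF f]]
  show "pu (\<lambda>q. L (f q)) p = L (pu f p)" and "pv (\<lambda>q. L (f q)) p = L (pv f p)"
    using has_derivative_imp_pu[OF d] has_derivative_imp_pv[OF d] by simp_all
qed

lemma pu_pv_bounded_bilinear:
  fixes f :: "real \<times> real \<Rightarrow> 'a::real_normed_vector"
    and g :: "real \<times> real \<Rightarrow> 'b::real_normed_vector"
    and prod :: "'a \<Rightarrow> 'b \<Rightarrow> 'c::real_normed_vector"
  assumes B: "bounded_bilinear prod"
    and f: "f differentiable (at p)" and g: "g differentiable (at p)"
  shows "pu (\<lambda>q. prod (f q) (g q)) p = prod (pu f p) (g p) + prod (f p) (pu g p)"
    and "pv (\<lambda>q. prod (f q) (g q)) p = prod (pv f p) (g p) + prod (f p) (pv g p)"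
proof -
  note d = bounded_bilinear.FDERIV[OF B has_derivative_partials[OF f] has_derivative_partials[OF g]]
  show "pu (\<lambda>q. prod (f q) (g q)) p = prod (pu f p) (g p) + prod (f p) (pu g p)"
    and "pv (\<lambda>q. prod (f q) (g q)) p = prod (pv f p) (g p) + prod (f p) (pv g p)"
    using has_derivative_imp_pu[OF d] has_derivative_imp_pv[OF d] by (simp_all add: add.commute)
qed

lemma pu_pv_cong_open:
  fixes f g :: "real \<times> real \<Rightarrow> 'a::real_normed_vector"
  assumes S: "open S" "p \<in> S" and eq: "\<And>q. q \<in> S \<Longrightarrow> f q = g q"
  shows "pu f p = pu g p" and "pv f p = pv g p"
proof -
  have "open ((\<lambda>s. (s, snd p)) -` S)" and "open ((\<lambda>t. (fst p, t)) -` S)"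
    using S(1) by (intro continuous_open_vimage continuous_intros; simp)+
  from this[THEN eventually_nhds_in_open]
  have "eventually (\<lambda>s. (s, snd p) \<in> S) (nhds (fst p))"
    and "eventually (\<lambda>t. (fst p, t) \<in> S) (nhds (snd p))"
    using S(2) by simp_all
  then have "eventually (\<lambda>s. s \<in> UNIV \<longrightarrow> f (s, snd p) = g (s, snd p)) (nhds (fst p))"
    and "eventually (\<lambda>t. t \<in> UNIV \<longrightarrow> f (fst p, t) = g (fst p, t)) (nhds (snd p))"
    by (auto elim!: eventually_mono intro: eq)
  then show "pu f p = pu g p" and "pv f p = pv g p"
    unfolding pu_def pv_def by (simp_all add: vector_derivative_cong_eq)
qed

lemma differentiable_exp:
  fixes f :: "'a::real_normed_vector \<Rightarrow> real"
  assumes "f differentiable (at x within S)"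
  shows "(\<lambda>x. exp (f x)) differentiable (at x within S)"
proof -
  obtain D where "(f has_derivative D) (at x within S)"
    using assms by (auto simp: differentiable_def)
  from has_derivative_exp[OF this] show ?thesis
    by (auto simp: differentiable_def)
qed

lemma differentiable_bounded_bilinear:
  fixes f :: "'a::real_normed_vector \<Rightarrow> 'b::real_normed_vector"
    and g :: "'a \<Rightarrow> 'c::real_normed_vector"
    and prod :: "'b \<Rightarrow> 'c \<Rightarrow> 'd::real_normed_vector"
  assumes B: "bounded_bilinear prod"
    and "f differentiable (at x within S)" and "g differentiable (at x within S)"
  shows "(\<lambda>x. prod (f x) (g x)) differentiable (at x within S)"
proof -
  obtain f' g' where "(f has_derivative f') (at x within S)" and "(g has_derivative g') (at x within S)"
    using assms(2,3) by (auto simp: differentiable_def)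
  from bounded_bilinear.FDERIV[OF B this] show ?thesis
    by (auto simp: differentiable_def)
qed

section \<open>Smooth maps\<close>

lemma smooth_on_cong:
  assumes "smooth_on S f" and "\<And>p. p \<in> S \<Longrightarrow> f p = g p"
  shows "smooth_on S g"
  using assms unfolding smooth_on_def by metis

lemma smooth_on_imp_differentiable:
  assumes "open S" and "smooth_on S f" and "p \<in> S"
  shows "f differentiable (at p)"
proof -
  obtain D where D0: "\<forall>p\<in>S. D 0 0 p = f p"
    and D: "\<forall>i j. \<forall>p\<in>S. (D i j has_derivative
              (\<lambda>(h,k). h *\<^sub>R D (Suc i) j p + k *\<^sub>R D i (Suc j) p)) (at p)"
    using assms(2) unfolding smooth_on_def by blast
  have "D 0 0 differentiable (at p)"
    using D assms(3) differentiable_def by blast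
  then obtain L where "(D 0 0 has_derivative L) (at p)"
    by (auto simp: differentiable_def)
  then have "(f has_derivative L) (at p)"
    using assms(1,3) D0 by (auto elim!: has_derivative_transform_within_open)
  then show ?thesis
    by (auto simp: differentiable_def)
qed

lemma smooth_on_bounded_linear:
  assumes L: "bounded_linear L" and f: "smooth_on S f"
  shows "smooth_on S (\<lambda>p. L (f p))"
proof -
  obtain D where D0: "\<forall>p\<in>S. D 0 0 p = f p" and Dc: "\<forall>i j. continuous_on S (D i j)"
    and D: "\<forall>i j. \<forall>p\<in>S. (D i j has_derivative
              (\<lambda>(h,k). h *\<^sub>R D (Suc i) j p + k *\<^sub>R D i (Suc j) p)) (at p)"
    using f unfolding smooth_on_def by blast
  show ?thesis
    unfolding smooth_on_def
  proof (intro exI[of _ "\<lambda>i j p. L (D i j p)"] conjI allI ballI)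
    fix i j
    show "continuous_on S (\<lambda>p. L (D i j p))"
      using Dc by (intro bounded_linear.continuous_on[OF L]) blast
  next
    fix i j p
    assume "p \<in> S"
    then have "((\<lambda>p. L (D i j p)) has_derivative
        (\<lambda>d. L ((\<lambda>(h,k). h *\<^sub>R D (Suc i) j p + k *\<^sub>R D i (Suc j) p) d))) (at p)"
      using D by (intro bounded_linear.has_derivative[OF L]) blast
    then show "((\<lambda>p. L (D i j p)) has_derivative
        (\<lambda>(h,k). h *\<^sub>R L (D (Suc i) j p) + k *\<^sub>R L (D i (Suc j) p))) (at p)"
      by (simp add: linear_simps[OF L] split_beta')
  qed (use D0 in auto)
qed

definition leibniz_sum :: "(nat \<Rightarrow> nat \<Rightarrow> 'a::real_vector) \<Rightarrow> nat \<Rightarrow> 'a" where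
  "leibniz_sum T n = (\<Sum>a\<le>n. real (n choose a) *\<^sub>R T a (n - a))"

lemma leibniz_sum_0 [simp]: "leibniz_sum T 0 = T 0 0"
  by (simp add: leibniz_sum_def)

lemma leibniz_sum_add:
  "leibniz_sum (\<lambda>a b. S a b + T a b) n = leibniz_sum S n + leibniz_sum T n"
  by (simp add: leibniz_sum_def scaleR_add_right sum.distrib)

lemma leibniz_sum_scaleR:
  "leibniz_sum (\<lambda>a b. r *\<^sub>R T a b) n = r *\<^sub>R leibniz_sum T n"
  by (simp add: leibniz_sum_def scaleR_sum_right mult.commute)

lemma leibniz_sum_Suc:
  "leibniz_sum (\<lambda>a b. T (Suc a) b + T a (Suc b)) n = leibniz_sum T (Suc n)"
proof -
  have "(\<Sum>a\<le>n. real (n choose a) *\<^sub>R T a (Suc (n - a)))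
      = (\<Sum>a\<le>Suc n. real (n choose a) *\<^sub>R T a (Suc n - a))"
    by (simp add: Suc_diff_le)
  also have "\<dots> = T 0 (Suc n) + (\<Sum>a\<le>n. real (n choose Suc a) *\<^sub>R T (Suc a) (n - a))"
    by (subst sum.atMost_Suc_shift) simp
  finally have lower: "(\<Sum>a\<le>n. real (n choose a) *\<^sub>R T a (Suc (n - a)))
      = T 0 (Suc n) + (\<Sum>a\<le>n. real (n choose Suc a) *\<^sub>R T (Suc a) (n - a))" .
  have "leibniz_sum T (Suc n) = T 0 (Suc n)
      + (\<Sum>a\<le>n. real (n choose a) *\<^sub>R T (Suc a) (n - a))
      + (\<Sum>a\<le>n. real (n choose Suc a) *\<^sub>R T (Suc a) (n - a))"
    unfolding leibniz_sum_def
    by (subst sum.atMost_Suc_shift) (simp add: scaleR_add_left sum.distrib add.assoc)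
  then show ?thesis
    unfolding leibniz_sum_def scaleR_add_right sum.distrib lower by (simp add: algebra_simps)
qed

lemma has_derivative_leibniz_sum:
  assumes "\<And>a b. (T a b has_derivative T' a b) F"
  shows "((\<lambda>x. leibniz_sum (\<lambda>a b. T a b x) n) has_derivative
           (\<lambda>h. leibniz_sum (\<lambda>a b. T' a b h) n)) F"
  unfolding leibniz_sum_def by (intro has_derivative_sum has_derivative_scaleR_right assms)

lemma continuous_on_leibniz_sum:
  fixes T :: "nat \<Rightarrow> nat \<Rightarrow> 'b::topological_space \<Rightarrow> 'a::real_normed_vector"
  assumes "\<And>a b. continuous_on S (T a b)"
  shows "continuous_on S (\<lambda>x. leibniz_sum (\<lambda>a b. T a b x) n)"
  unfolding leibniz_sum_def by (auto intro!: continuous_on_sum continuous_on_scaleR assms)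

lemma leibniz_sum2_Suc:
  "leibniz_sum (\<lambda>a m. leibniz_sum (\<lambda>c n.
       h *\<^sub>R (T (Suc a) c m n + T a c (Suc m) n) + k *\<^sub>R (T a (Suc c) m n + T a c m (Suc n))) j) i
   = h *\<^sub>R leibniz_sum (\<lambda>a m. leibniz_sum (\<lambda>c n. T a c m n) j) (Suc i)
     + k *\<^sub>R leibniz_sum (\<lambda>a m. leibniz_sum (\<lambda>c n. T a c m n) (Suc j)) i"
proof -
  define X where "X = (\<lambda>a m. leibniz_sum (\<lambda>c n. T a c m n) j)"
  have inner: "leibniz_sum (\<lambda>c n.
       h *\<^sub>R (T (Suc a) c m n + T a c (Suc m) n) + k *\<^sub>R (T a (Suc c) m n + T a c m (Suc n))) j
     = h *\<^sub>R (X (Suc a) m + X a (Suc m)) + k *\<^sub>R leibniz_sum (\<lambda>c n. T a c m n) (Suc j)" for a m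
    using leibniz_sum_Suc[of "\<lambda>c n. T a c m n" j]
    by (simp add: X_def leibniz_sum_add leibniz_sum_scaleR)
  have "leibniz_sum (\<lambda>a m. leibniz_sum (\<lambda>c n.
       h *\<^sub>R (T (Suc a) c m n + T a c (Suc m) n) + k *\<^sub>R (T a (Suc c) m n + T a c m (Suc n))) j) i
    = h *\<^sub>R leibniz_sum (\<lambda>a m. X (Suc a) m + X a (Suc m)) i
      + k *\<^sub>R leibniz_sum (\<lambda>a m. leibniz_sum (\<lambda>c n. T a c m n) (Suc j)) i"
    unfolding inner by (simp only: leibniz_sum_add leibniz_sum_scaleR)
  also have "\<dots> = h *\<^sub>R leibniz_sum X (Suc i)
      + k *\<^sub>R leibniz_sum (\<lambda>a m. leibniz_sum (\<lambda>c n. T a c m n) (Suc j)) i"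
    unfolding leibniz_sum_Suc[of X i] ..
  finally show ?thesis
    by (simp only: X_def)
qed

lemma smooth_on_bounded_bilinear:
  fixes f :: "real \<times> real \<Rightarrow> 'a::real_normed_vector"
    and g :: "real \<times> real \<Rightarrow> 'b::real_normed_vector"
    and prod :: "'a \<Rightarrow> 'b \<Rightarrow> 'c::real_normed_vector"
  assumes B: "bounded_bilinear prod" and f: "smooth_on S f" and g: "smooth_on S g"
  shows "smooth_on S (\<lambda>p. prod (f p) (g p))"
proof -
  interpret bounded_bilinear prod by (rule B)
  obtain F where F0: "\<forall>p\<in>S. F 0 0 p = f p" and Fc: "\<forall>i j. continuous_on S (F i j)"
    and Fd: "\<forall>i j. \<forall>p\<in>S. (F i j has_derivative
              (\<lambda>(h,k). h *\<^sub>R F (Suc i) j p + k *\<^sub>R F i (Suc j) p)) (at p)"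
    using f unfolding smooth_on_def by blast
  obtain G where G0: "\<forall>p\<in>S. G 0 0 p = g p" and Gc: "\<forall>i j. continuous_on S (G i j)"
    and Gd: "\<forall>i j. \<forall>p\<in>S. (G i j has_derivative
              (\<lambda>(h,k). h *\<^sub>R G (Suc i) j p + k *\<^sub>R G i (Suc j) p)) (at p)"
    using g unfolding smooth_on_def by blast
  \<comment> \<open>by the Leibniz rule, P i j is the partial derivative of order (i, j) of prod f g\<close>
  define P where "P = (\<lambda>i j p. leibniz_sum (\<lambda>a m. leibniz_sum (\<lambda>c n. prod (F a c p) (G m n p)) j) i)"
  show ?thesis
    unfolding smooth_on_def
  proof (intro exI[of _ P] conjI allI ballI)
    fix i j
    show "continuous_on S (P i j)"
      unfolding P_def using Fc Gc by (intro continuous_on_leibniz_sum continuous_on) blast+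
  next
    fix i j p
    assume p: "p \<in> S"
    have "((\<lambda>x. prod (F a c x) (G m n x)) has_derivative (\<lambda>(h, k).
        h *\<^sub>R (prod (F (Suc a) c p) (G m n p) + prod (F a c p) (G (Suc m) n p))
        + k *\<^sub>R (prod (F a (Suc c) p) (G m n p) + prod (F a c p) (G m (Suc n) p)))) (at p)" for a c m n
      using FDERIV[OF Fd[rule_format, OF p] Gd[rule_format, OF p]]
      by (rule has_derivative_eq_rhs)
         (auto simp: fun_eq_iff add_left add_right scaleR_left scaleR_right algebra_simps)
    then have "(P i j has_derivative (\<lambda>d. leibniz_sum (\<lambda>a m. leibniz_sum (\<lambda>c n. (\<lambda>(h, k).
        h *\<^sub>R (prod (F (Suc a) c p) (G m n p) + prod (F a c p) (G (Suc m) n p))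
        + k *\<^sub>R (prod (F a (Suc c) p) (G m n p) + prod (F a c p) (G m (Suc n) p))) d) j) i)) (at p)"
      unfolding P_def by (intro has_derivative_leibniz_sum)
    then show "(P i j has_derivative (\<lambda>(h, k). h *\<^sub>R P (Suc i) j p + k *\<^sub>R P i (Suc j) p)) (at p)"
      by (rule has_derivative_eq_rhs)
         (simp add: fun_eq_iff split_beta P_def
            leibniz_sum2_Suc[where T = "\<lambda>a c m n. prod (F a c p) (G m n p)"])
  qed (simp add: P_def F0 G0)
qed

section \<open>2x2 matrices as E^4_2\<close>

lemma mat2_nth [simp]:
  "mat2 a b c d $ 1 $ 1 = a" "mat2 a b c d $ 1 $ 2 = b"
  "mat2 a b c d $ 2 $ 1 = c" "mat2 a b c d $ 2 $ 2 = d"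
  by (simp_all add: mat2_def)

lemma mat2_eq_iff:
  "(X :: mat2) = Y \<longleftrightarrow> X$1$1 = Y$1$1 \<and> X$1$2 = Y$1$2 \<and> X$2$1 = Y$2$1 \<and> X$2$2 = Y$2$2"
  by (auto simp: vec_eq_iff forall_2)

lemma mat2_mult [simp]:
  "mat2 a b c d ** mat2 a' b' c' d' = mat2 (a*a' + b*c') (a*b' + b*d') (c*a' + d*c') (c*b' + d*d')"
  by (simp add: mat2_eq_iff matrix_matrix_mult_def sum_2)

lemma mat2_add [simp]: "mat2 a b c d + mat2 a' b' c' d' = mat2 (a+a') (b+b') (c+c') (d+d')"
  by (simp add: mat2_eq_iff)

lemma mat2_scaleR [simp]: "r *\<^sub>R mat2 a b c d = mat2 (r*a) (r*b) (r*c) (r*d)"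
  by (simp add: mat2_eq_iff)

lemma mat2_transpose [simp]: "transpose (mat2 a b c d) = mat2 a c b d"
  by (simp add: mat2_eq_iff transpose_def)

lemma det_mat2 [simp]: "det (mat2 a b c d) = a*d - b*c"
  by (simp add: det_2)

lemma mat2_eq_0_iff [simp]: "mat2 a b c d = 0 \<longleftrightarrow> a = 0 \<and> b = 0 \<and> c = 0 \<and> d = 0"
  by (simp add: mat2_eq_iff)

lemma mat_1_eq_mat2: "(mat 1 :: mat2) = mat2 1 0 0 1"
  by (simp add: mat2_eq_iff mat_def)

lemma lor_inner_mat2 [simp]:
  "lor_inner (mat2 a b c d) (mat2 a' b' c' d') = ((a*a' + b*c' + c*b' + d*d') - (a+d)*(a'+d')) / 2"
  by (simp add: lor_inner_def mtrace_def)

lemma lor_inner_self: "lor_inner X X = - det X"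
  by (simp add: lor_inner_def mtrace_def matrix_matrix_mult_def sum_2 det_2 field_simps)

lemma lor_inner_polarization: "lor_inner X Y = (det X + det Y - det (X + Y)) / 2"
  by (simp add: lor_inner_def mtrace_def matrix_matrix_mult_def sum_2 det_2 field_simps)

lemma matrix_add_rdistrib: "(A + B) ** C = A ** C + B ** C"
  by (simp add: vec_eq_iff matrix_matrix_mult_def sum.distrib algebra_simps)

lemma lor_inner_SL2_invariant:
  fixes P Q :: mat2
  assumes "det P = 1" and "det Q = 1"
  shows "lor_inner (P ** X ** Q) (P ** Y ** Q) = lor_inner X Y"
proof -
  have "P ** X ** Q + P ** Y ** Q = P ** (X + Y) ** Q"
    by (simp add: matrix_add_ldistrib matrix_add_rdistrib)
  then show ?thesis
    using assms by (simp add: lor_inner_polarization det_mul)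
qed

definition adj2 :: "mat2 \<Rightarrow> mat2" where
  "adj2 X = mat2 (X$2$2) (- X$1$2) (- X$2$1) (X$1$1)"

lemma adj2_mat2 [simp]: "adj2 (mat2 a b c d) = mat2 d (-b) (-c) a"
  by (simp add: adj2_def)

lemma adj2_mult_left: "adj2 X ** X = det X *\<^sub>R mat 1"
  and adj2_mult_right: "X ** adj2 X = det X *\<^sub>R mat 1"
  by (simp_all add: mat2_eq_iff adj2_def matrix_matrix_mult_def sum_2 det_2 mat_def)

lemma adj2_matrix_mult: "adj2 (X ** Y) = adj2 Y ** adj2 X"
  by (simp add: mat2_eq_iff adj2_def matrix_matrix_mult_def sum_2 algebra_simps)

lemma det_adj2 [simp]: "det (adj2 X) = det X"
  by (simp add: adj2_def det_2 mult.commute)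

lemma bounded_linear_adj2: "bounded_linear adj2"
  by (auto intro!: linearI simp: linear_conv_bounded_linear[symmetric] adj2_def mat2_eq_iff)

lemma bounded_linear_transpose: "bounded_linear (transpose :: real^'n^'m \<Rightarrow> real^'m^'n)"
  by (auto intro!: linearI simp: linear_conv_bounded_linear[symmetric] transpose_def vec_eq_iff)

lemma bounded_bilinear_matrix_mult:
  "bounded_bilinear ((**) :: real^'n^'m \<Rightarrow> real^'p^'n \<Rightarrow> real^'p^'m)"
  unfolding bilinear_conv_bounded_bilinear[symmetric] bilinear_def
  by (auto intro!: linearI simp: matrix_add_ldistrib matrix_add_rdistrib
      matrix_scalar_ac scalar_matrix_assoc)

lemma matrix_inv_eqI:
  fixes A :: "'a::semiring_1^'n^'n"
  assumes AB: "A ** B = mat 1" and BA: "B ** A = mat 1"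
  shows "matrix_inv A = B"
proof -
  have "A ** matrix_inv A = mat 1 \<and> matrix_inv A ** A = mat 1"
    unfolding matrix_inv_def by (rule someI[of _ B]) (use AB BA in blast)
  then have "matrix_inv A = (B ** A) ** matrix_inv A"
    using BA by simp
  also have "\<dots> = B"
    using \<open>A ** matrix_inv A = mat 1 \<and> _\<close> by (simp flip: matrix_mul_assoc)
  finally show ?thesis .
qed

lemma matrix_inv_eq_adj2: "det X = 1 \<Longrightarrow> matrix_inv X = adj2 X"
  by (simp add: matrix_inv_eqI adj2_mult_left adj2_mult_right)

lemma SL2_sandwich_eq_0_iff:
  fixes P Q X :: mat2
  assumes "det P = 1" and "det Q = 1"
  shows "P ** X ** Q = 0 \<longleftrightarrow> X = 0"
proof
  assume "P ** X ** Q = 0"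
  then have "(adj2 P ** P) ** X ** (Q ** adj2 Q) = 0"
    by (metis matrix_mul_assoc times0_left times0_right)
  then show "X = 0"
    using assms by (simp add: adj2_mult_left adj2_mult_right)
qed simp

lemma pu_pv_matrix_frame_product:
  fixes F G :: "real \<times> real \<Rightarrow> real^'n^'n"
  assumes F: "F differentiable (at p)" and G: "G differentiable (at p)"
  shows "pu F p = F p ** X \<Longrightarrow> pu G p = Y ** G p \<Longrightarrow>
           pu (\<lambda>q. F q ** G q) p = F p ** (X + Y) ** G p"
    and "pv F p = F p ** X \<Longrightarrow> pv G p = Y ** G p \<Longrightarrow>
           pv (\<lambda>q. F q ** G q) p = F p ** (X + Y) ** G p"
  using pu_pv_bounded_bilinear[OF bounded_bilinear_matrix_mult F G]
  by (simp_all add: matrix_add_ldistrib matrix_add_rdistrib matrix_mul_assoc)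

lemma mat2_upper_partials:
  fixes c :: "real \<times> real \<Rightarrow> real"
  assumes c: "c differentiable (at p)"
  shows "(\<lambda>q. mat2 0 (c q) 0 0) differentiable (at p)"
    and "pv (\<lambda>q. mat2 0 (c q) 0 0) p = mat2 0 (pv c p) 0 0"
proof -
  have upper: "(\<lambda>q. mat2 0 (c q) 0 0) = (\<lambda>q. c q *\<^sub>R mat2 0 1 0 0)"
    by (simp add: fun_eq_iff)
  show "(\<lambda>q. mat2 0 (c q) 0 0) differentiable (at p)"
    unfolding upper using c by (intro differentiable_scaleR differentiable_const)
  show "pv (\<lambda>q. mat2 0 (c q) 0 0) p = mat2 0 (pv c p) 0 0"
    unfolding upper pu_pv_bounded_linear(2)[OF bounded_linear_scaleR_left[of "mat2 0 1 0 0"] c]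
    by simp
qed

lemma pv_matrix_frame_product3:
  fixes F A G :: "real \<times> real \<Rightarrow> real^'n^'n"
  assumes F: "F differentiable (at p)" and A: "A differentiable (at p)" and G: "G differentiable (at p)"
    and F_v: "pv F p = F p ** X" and G_v: "pv G p = Y ** G p"
  shows "pv (\<lambda>q. F q ** A q ** G q) p = F p ** (X ** A p + pv A p + A p ** Y) ** G p"
proof -
  note product_rule = pu_pv_bounded_bilinear(2)[OF bounded_bilinear_matrix_mult]
  have FA: "(\<lambda>q. F q ** A q) differentiable (at p)"
    by (rule differentiable_bounded_bilinear[OF bounded_bilinear_matrix_mult F A])
  have "pv (\<lambda>q. F q ** A q ** G q) p = pv (\<lambda>q. F q ** A q) p ** G p + F p ** A p ** pv G p"
    by (rule product_rule[OF FA G])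
  also have "\<dots> = (pv F p ** A p + F p ** pv A p) ** G p + F p ** A p ** pv G p"
    by (simp only: product_rule[OF F A])
  also have "\<dots> = F p ** (X ** A p + pv A p + A p ** Y) ** G p"
    by (simp add: F_v G_v matrix_add_ldistrib matrix_add_rdistrib matrix_mul_assoc)
  finally show ?thesis .
qed

section \<open>CMC surfaces from SL_2 R frames\<close>

lemma U1_add_transpose_U2: "U1 \<omega> Q H p + transpose (U2 \<omega> Q H p) = mat2 0 (exp (\<omega> p / 2)) 0 0"
  by (simp add: U1_def U2_def field_simps)

lemma V1_add_transpose_V2: "V1 \<omega> R H p + transpose (V2 \<omega> R H p) = mat2 0 0 (exp (\<omega> p / 2)) 0"
  by (simp add: V1_def V2_def field_simps)

lemma adj2_U2': "adj2 (U2' \<omega> Q H p) = transpose (U2 \<omega> Q H p)"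
  and adj2_V2': "adj2 (V2' \<omega> R H p) = transpose (V2 \<omega> R H p)"
  by (simp_all add: U2'_def U2_def V2'_def V2_def)

text \<open>The summand mat2 0 x 0 0 stands for the v-derivative of U1 + U2^t; being off-diagonal,
  it is orthogonal to kprime.\<close>

lemma lor_inner_kprime_mean_curvature:
  "lor_inner (V1 \<omega> R H p ** mat2 0 (exp (\<omega> p / 2)) 0 0 + mat2 0 x 0 0
              + mat2 0 (exp (\<omega> p / 2)) 0 0 ** transpose (V2 \<omega> R H p)) kprime
   = exp (\<omega> p) * H / 2"
proof -
  have "exp (\<omega> p / 2) * exp (\<omega> p / 2) = exp (\<omega> p)"
    by (simp flip: exp_add)
  then show ?thesis
    by (simp add: V1_def V2_def kprime_def field_simps)
qed

lemma conformal_timelike_cmc_SL2_sandwich: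
  fixes F G :: "real \<times> real \<Rightarrow> mat2"
  assumes smooth: "smooth_on M (\<lambda>p. F p ** G p)"
    and det_F: "\<And>p. p \<in> M \<Longrightarrow> det (F p) = 1" and det_G: "\<And>p. p \<in> M \<Longrightarrow> det (G p) = 1"
    and \<phi>_u: "\<And>p. p \<in> M \<Longrightarrow>
      pu (\<lambda>q. F q ** G q) p = F p ** mat2 0 (exp (\<omega> p / 2)) 0 0 ** G p"
    and \<phi>_v: "\<And>p. p \<in> M \<Longrightarrow>
      pv (\<lambda>q. F q ** G q) p = F p ** mat2 0 0 (exp (\<omega> p / 2)) 0 ** G p"
    and \<phi>_uv: "\<And>p. p \<in> M \<Longrightarrow>
      lor_inner (pv (pu (\<lambda>q. F q ** G q)) p) (F p ** kprime ** G p) = exp (\<omega> p) * H / 2"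
  shows "conformal_timelike_cmc M (\<lambda>p. F p ** G p) (\<lambda>p. F p ** kprime ** G p) \<omega> H"
  unfolding conformal_timelike_cmc_def
proof (intro conjI ballI allI impI smooth)
  fix p
  assume p: "p \<in> M"
  note invariance = lor_inner_SL2_invariant[OF det_F[OF p] det_G[OF p]]
  show "lor_inner (F p ** G p) (F p ** G p) = -1"
    and "lor_inner (F p ** kprime ** G p) (F p ** kprime ** G p) = 1"
    by (simp_all add: lor_inner_self det_mul det_F[OF p] det_G[OF p] kprime_def)
  have "lor_inner kprime (mat 1) = 0"
    by (simp add: kprime_def mat_1_eq_mat2)
  then show "lor_inner (F p ** kprime ** G p) (F p ** G p) = 0"
    using invariance[of kprime "mat 1"] by simp
  show "lor_inner (pu (\<lambda>p. F p ** G p) p) (pu (\<lambda>p. F p ** G p) p) = 0"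
    and "lor_inner (pv (\<lambda>p. F p ** G p) p) (pv (\<lambda>p. F p ** G p) p) = 0"
    and "lor_inner (pu (\<lambda>p. F p ** G p) p) (pv (\<lambda>p. F p ** G p) p) = exp (\<omega> p) / 2"
    and "lor_inner (F p ** kprime ** G p) (pu (\<lambda>p. F p ** G p) p) = 0"
    and "lor_inner (F p ** kprime ** G p) (pv (\<lambda>p. F p ** G p) p) = 0"
    by (simp_all add: \<phi>_u[OF p] \<phi>_v[OF p] invariance kprime_def flip: exp_add)
  show "H = 2 * exp (- \<omega> p) * lor_inner (pv (pu (\<lambda>p. F p ** G p)) p) (F p ** kprime ** G p)"
    by (simp add: \<phi>_uv[OF p] exp_minus field_simps)
next
  fix p a b
  assume p: "p \<in> M"
    and "a *\<^sub>R pu (\<lambda>p. F p ** G p) p + b *\<^sub>R pv (\<lambda>p. F p ** G p) p = 0"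
  then have "F p ** (a *\<^sub>R mat2 0 (exp (\<omega> p / 2)) 0 0 + b *\<^sub>R mat2 0 0 (exp (\<omega> p / 2)) 0) ** G p = 0"
    by (simp add: \<phi>_u \<phi>_v matrix_add_ldistrib matrix_add_rdistrib matrix_scalar_ac scalar_matrix_assoc
        del: mat2_scaleR mat2_add)
  then show "a = 0" and "b = 0"
    by (simp_all add: SL2_sandwich_eq_0_iff det_F[OF p] det_G[OF p])
qed

lemma conformal_timelike_cmc_frame_product:
  fixes F G :: "real \<times> real \<Rightarrow> mat2"
  assumes M: "open M" and \<omega>: "smooth_on M \<omega>" and F: "smooth_on M F" and G: "smooth_on M G"
    and det_F: "\<And>p. p \<in> M \<Longrightarrow> det (F p) = 1" and det_G: "\<And>p. p \<in> M \<Longrightarrow> det (G p) = 1"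
    and F_u: "\<And>p. p \<in> M \<Longrightarrow> pu F p = F p ** U1 \<omega> Q H p"
    and F_v: "\<And>p. p \<in> M \<Longrightarrow> pv F p = F p ** V1 \<omega> R H p"
    and G_u: "\<And>p. p \<in> M \<Longrightarrow> pu G p = transpose (U2 \<omega> Q H p) ** G p"
    and G_v: "\<And>p. p \<in> M \<Longrightarrow> pv G p = transpose (V2 \<omega> R H p) ** G p"
  shows "conformal_timelike_cmc M (\<lambda>p. F p ** G p) (\<lambda>p. F p ** kprime ** G p) \<omega> H"
proof -
  have diff: "F differentiable (at p)" "G differentiable (at p)" "\<omega> differentiable (at p)"
    if "p \<in> M" for p
    using smooth_on_imp_differentiable M F G \<omega> that by blast+
  have "(\<lambda>q. exp (\<omega> q / 2)) differentiable (at p)" if "p \<in> M" for p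
    using diff(3)[OF that] by (intro differentiable_exp differentiable_divide) simp_all
  note upper = mat2_upper_partials[OF this]
  have \<phi>_u: "pu (\<lambda>q. F q ** G q) p = F p ** mat2 0 (exp (\<omega> p / 2)) 0 0 ** G p" if p: "p \<in> M" for p
    using pu_pv_matrix_frame_product(1)[OF diff(1,2)[OF p] F_u[OF p] G_u[OF p]]
    by (simp add: U1_add_transpose_U2)
  show ?thesis
  proof (rule conformal_timelike_cmc_SL2_sandwich)
    show "smooth_on M (\<lambda>p. F p ** G p)"
      by (rule smooth_on_bounded_bilinear[OF bounded_bilinear_matrix_mult F G])
    fix p
    assume p: "p \<in> M"
    show "det (F p) = 1" and "det (G p) = 1"
      using det_F[OF p] det_G[OF p] .
    show "pu (\<lambda>q. F q ** G q) p = F p ** mat2 0 (exp (\<omega> p / 2)) 0 0 ** G p"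
      by (rule \<phi>_u[OF p])
    show "pv (\<lambda>q. F q ** G q) p = F p ** mat2 0 0 (exp (\<omega> p / 2)) 0 ** G p"
      using pu_pv_matrix_frame_product(2)[OF diff(1,2)[OF p] F_v[OF p] G_v[OF p]]
      by (simp add: V1_add_transpose_V2)
    have "pv (pu (\<lambda>q. F q ** G q)) p = F p ** (V1 \<omega> R H p ** mat2 0 (exp (\<omega> p / 2)) 0 0
        + mat2 0 (pv (\<lambda>q. exp (\<omega> q / 2)) p) 0 0
        + mat2 0 (exp (\<omega> p / 2)) 0 0 ** transpose (V2 \<omega> R H p)) ** G p"
      using pu_pv_cong_open(2)[OF M p \<phi>_u] upper(2)[OF p]
        pv_matrix_frame_product3[OF diff(1)[OF p] upper(1)[OF p] diff(2)[OF p] F_v[OF p] G_v[OF p]]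
      by simp
    then show "lor_inner (pv (pu (\<lambda>q. F q ** G q)) p) (F p ** kprime ** G p) = exp (\<omega> p) * H / 2"
      using lor_inner_kprime_mean_curvature[of \<omega> R H p "pv (\<lambda>q. exp (\<omega> q / 2)) p"]
      by (simp add: lor_inner_SL2_invariant det_F[OF p] det_G[OF p])
  qed
qed

lemma conformal_timelike_cmc_transpose_frame:
  assumes M: "open M" and \<omega>: "smooth_on M \<omega>"
    and \<Phi>1: "SL2_map M \<Phi>1" and \<Phi>2: "SL2_map M \<Phi>2"
    and frame: "\<And>p. p \<in> M \<Longrightarrow>
      pu \<Phi>1 p = \<Phi>1 p ** U1 \<omega> Q H p \<and> pv \<Phi>1 p = \<Phi>1 p ** V1 \<omega> R H p \<and>
      pu \<Phi>2 p = \<Phi>2 p ** U2 \<omega> Q H p \<and> pv \<Phi>2 p = \<Phi>2 p ** V2 \<omega> R H p"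
  shows "conformal_timelike_cmc M (\<lambda>p. \<Phi>1 p ** transpose (\<Phi>2 p))
           (\<lambda>p. \<Phi>1 p ** kprime ** transpose (\<Phi>2 p)) \<omega> H"
proof -
  have smooth: "smooth_on M \<Phi>1" "smooth_on M \<Phi>2"
    and det: "\<And>p. p \<in> M \<Longrightarrow> det (\<Phi>1 p) = 1" "\<And>p. p \<in> M \<Longrightarrow> det (\<Phi>2 p) = 1"
    using \<Phi>1 \<Phi>2 by (auto simp: SL2_map_def)
  note transpose_partials = pu_pv_bounded_linear[OF bounded_linear_transpose
      smooth_on_imp_differentiable[OF M smooth(2)]]
  show ?thesis
    using M \<omega> smooth(1) smooth_on_bounded_linear[OF bounded_linear_transpose smooth(2)]
  proof (rule conformal_timelike_cmc_frame_product)
    fix p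
    assume p: "p \<in> M"
    show "det (\<Phi>1 p) = 1" and "det (transpose (\<Phi>2 p)) = 1"
      using det p by simp_all
    show "pu \<Phi>1 p = \<Phi>1 p ** U1 \<omega> Q H p" and "pv \<Phi>1 p = \<Phi>1 p ** V1 \<omega> R H p"
      using frame[OF p] by simp_all
    show "pu (\<lambda>p. transpose (\<Phi>2 p)) p = transpose (U2 \<omega> Q H p) ** transpose (\<Phi>2 p)"
      and "pv (\<lambda>p. transpose (\<Phi>2 p)) p = transpose (V2 \<omega> R H p) ** transpose (\<Phi>2 p)"
      using frame[OF p] transpose_partials[OF p] by (simp_all add: matrix_transpose_mul)
  qed
qed

lemma conformal_timelike_cmc_inverse_frame:
  assumes M: "open M" and \<omega>: "smooth_on M \<omega>"
    and \<Psi>1: "SL2_map M \<Psi>1" and \<Psi>2: "SL2_map M \<Psi>2"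
    and frame: "\<And>p. p \<in> M \<Longrightarrow>
      pu \<Psi>1 p = \<Psi>1 p ** U1 \<omega> Q H p \<and> pv \<Psi>1 p = \<Psi>1 p ** V1 \<omega> R H p \<and>
      pu \<Psi>2 p = \<Psi>2 p ** U2' \<omega> Q H p \<and> pv \<Psi>2 p = \<Psi>2 p ** V2' \<omega> R H p"
  shows "conformal_timelike_cmc M (\<lambda>p. \<Psi>1 p ** matrix_inv (\<Psi>2 p))
           (\<lambda>p. \<Psi>1 p ** kprime ** matrix_inv (\<Psi>2 p)) \<omega> H"
proof -
  have smooth: "smooth_on M \<Psi>1" "smooth_on M \<Psi>2"
    and det: "\<And>p. p \<in> M \<Longrightarrow> det (\<Psi>1 p) = 1" "\<And>p. p \<in> M \<Longrightarrow> det (\<Psi>2 p) = 1"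
    using \<Psi>1 \<Psi>2 by (auto simp: SL2_map_def)
  have inv: "matrix_inv (\<Psi>2 p) = adj2 (\<Psi>2 p)" if "p \<in> M" for p
    using det(2)[OF that] by (rule matrix_inv_eq_adj2)
  have inv_partials: "pu (\<lambda>q. matrix_inv (\<Psi>2 q)) p = adj2 (pu \<Psi>2 p)"
      "pv (\<lambda>q. matrix_inv (\<Psi>2 q)) p = adj2 (pv \<Psi>2 p)" if p: "p \<in> M" for p
    using pu_pv_cong_open[OF M p, of "\<lambda>q. matrix_inv (\<Psi>2 q)" "\<lambda>q. adj2 (\<Psi>2 q)"]
      pu_pv_bounded_linear[OF bounded_linear_adj2 smooth_on_imp_differentiable[OF M smooth(2) p]]
    by (simp_all add: inv)
  show ?thesis
    using M \<omega> smooth(1) smooth_on_cong[OF smooth_on_bounded_linear[OF bounded_linear_adj2 smooth(2)]]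
  proof (rule conformal_timelike_cmc_frame_product)
    fix p
    assume p: "p \<in> M"
    show "adj2 (\<Psi>2 p) = matrix_inv (\<Psi>2 p)"
      using inv[OF p] by simp
    show "det (\<Psi>1 p) = 1" and "det (matrix_inv (\<Psi>2 p)) = 1"
      using det p inv[OF p] by simp_all
    show "pu \<Psi>1 p = \<Psi>1 p ** U1 \<omega> Q H p" and "pv \<Psi>1 p = \<Psi>1 p ** V1 \<omega> R H p"
      using frame[OF p] by simp_all
    show "pu (\<lambda>p. matrix_inv (\<Psi>2 p)) p = transpose (U2 \<omega> Q H p) ** matrix_inv (\<Psi>2 p)"
      and "pv (\<lambda>p. matrix_inv (\<Psi>2 p)) p = transpose (V2 \<omega> R H p) ** matrix_inv (\<Psi>2 p)"
      using frame[OF p] inv_partials[OF p] inv[OF p] by (simp_all add: adj2_matrix_mult adj2_U2' adj2_V2')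
  qed
qed

theorem theorem5p1:
  fixes M :: "(real \<times> real) set"
    and \<omega> Q R :: "real \<times> real \<Rightarrow> real"
    and H :: real
    and \<Phi>1 \<Phi>2 \<Psi>1 \<Psi>2 :: "real \<times> real \<Rightarrow> real^2^2"
  assumes "open M" and "connected M" and "simply_connected M"
    and "smooth_on M \<omega>" and "smooth_on M Q" and "smooth_on M R"
  shows
    "(SL2_map M \<Phi>1 \<and> SL2_map M \<Phi>2 \<and>
      (\<forall>p\<in>M. pu \<Phi>1 p = \<Phi>1 p ** U1 \<omega> Q H p \<and> pv \<Phi>1 p = \<Phi>1 p ** V1 \<omega> R H p \<and>
              pu \<Phi>2 p = \<Phi>2 p ** U2 \<omega> Q H p \<and> pv \<Phi>2 p = \<Phi>2 p ** V2 \<omega> R H p)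
      \<longrightarrow> conformal_timelike_cmc M (\<lambda>p. \<Phi>1 p ** transpose (\<Phi>2 p))
            (\<lambda>p. \<Phi>1 p ** kprime ** transpose (\<Phi>2 p)) \<omega> H)
     \<and>
     (SL2_map M \<Psi>1 \<and> SL2_map M \<Psi>2 \<and>
      (\<forall>p\<in>M. pu \<Psi>1 p = \<Psi>1 p ** U1 \<omega> Q H p \<and> pv \<Psi>1 p = \<Psi>1 p ** V1 \<omega> R H p \<and>
              pu \<Psi>2 p = \<Psi>2 p ** U2' \<omega> Q H p \<and> pv \<Psi>2 p = \<Psi>2 p ** V2' \<omega> R H p)
      \<longrightarrow> conformal_timelike_cmc M (\<lambda>p. \<Psi>1 p ** matrix_inv (\<Psi>2 p))
            (\<lambda>p. \<Psi>1 p ** kprime ** matrix_inv (\<Psi>2 p)) \<omega> H)"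
  \<comment> \<open>connectedness, simple connectivity and smoothness of Q, R only matter for the existence
    of the frames, not for the surfaces they define\<close>
  using conformal_timelike_cmc_transpose_frame[OF \<open>open M\<close> \<open>smooth_on M \<omega>\<close>]
    conformal_timelike_cmc_inverse_frame[OF \<open>open M\<close> \<open>smooth_on M \<omega>\<close>]
  by blast

end
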